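(* Let $\mathfrak l$ be a real finite-dimensional nilpotent admissible Lie algebra with $\dim\mathfrak l'=2$ and $\mathfrak l'\subset\mathfrak z(\mathfrak l)$, having a basis $X_1,\dots,X_n,Y,Z$ ($n\ge4$) with $[X_1,X_2]=Y$, $[X_1,X_3]=Z$, $[X_2,X_3]=0$, $[X_1,X_4]=0$, $[X_2,X_4]=Z$, and $[X_1,X_j]=[X_2,X_j]=0$ for $j\ge5$. Then $[X_3,X_j]=0$ for all $j\ge5$.
   Context: For a Lie algebra $\mathfrak l$: $\mathfrak l^1=\mathfrak l$, $\mathfrak l^{k+1}=[\mathfrak l,\mathfrak l^k]$, $\mathfrak l'=\mathfrak l^2$, $\mathfrak z(\mathfrak l)$ the centre. An orthogonal $\mathfrak l$-module $(\rho,\mathfrak a)$ is a finite-dimensional real vector space with a nondegenerate symmetric bilinear form $\langle\cdot,\cdot\rangle_{\mathfrak a}$ and a representation by skew-adjoint maps. $C^p(\mathfrak l,\mathfrak a)$: alternating $p$-linear maps with Chevalley–Eilenberg differential $d$; $C^p(\mathfrak l)=C^p(\mathfrak l,\mathbb R)$; $\langle\alpha\wedge\beta\rangle$ is the wedge product followed by contraction with $\langle\cdot,\cdot\rangle_{\mathfrak a}$. $\mathcal Z^2_Q(\mathfrak l,\mathfrak a)=\{(\alpha,\gamma)\in C^2(\mathfrak l,\mathfrak a)\oplus C^3(\mathfrak l): d\alpha=0,d\gamma=\frac12\langle\alpha\wedge\alpha\rangle\}$; the group $C^1(\mathfrak l,\mathfrak a)\oplus C^2(\mathfrak l)$ with $(\tau_1,\sigma_1)*(\tau_2,\sigma_2)=(\tau_1+\tau_2,\sigma_1+\sigma_2+\frac12\langle\tau_1\wedge\tau_2\rangle)$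 acts by $(\alpha,\gamma)(\tau,\sigma)=(\alpha+d\tau,\gamma+d\sigma+\langle(\alpha+\frac12d\tau)\wedge\tau\rangle)$; $\mathcal H^2_Q(\mathfrak l,\mathfrak a)$ is the orbit set. Admissibility: for semisimple $(\rho,\mathfrak a)$, with $\mathfrak l^{m+2}=0$, $\mathfrak l_{(0)}=\mathfrak z(\mathfrak l)\cap\ker\rho$, $\mathfrak l_{(k)}=\mathfrak z(\mathfrak l)\cap\mathfrak l^{k+1}$ ($k\ge1$), and a representative with $\alpha(\mathfrak l,\mathfrak l)\subset\mathfrak a^{\mathfrak l}$, a class is admissible iff for all $0\le k\le m$: $(A_k)$ whenever $L_0\in\mathfrak l_{(k)}$ and there are $A_0\in\mathfrak a$, $Z_0\in(\mathfrak l^{k+1})^*$ with $\alpha(L,L_0)=0$ and $\gamma(L,L_0,\cdot)=-\langle A_0,\alpha(L,\cdot)\rangle_{\mathfrak a}+\langle Z_0,[L,\cdot]\rangle$ on $\mathfrak l^{k+1}$ for all $L$, then $L_0=0$; $(B_k)$ $\alpha$ applied to the kernel of the bracket map $\mathfrak l\otimes\mathfrak l^{k+1}\to\mathfrak l$ is a nondegenerate subspace of $\mathfrak a$. $\mathfrak l$ is admissible if some semisimple orthogonal module admits an admissible class. *)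

theory Defs
  imports "HOL-Analysis.Analysis"
begin

definition lie_algebra :: "('l::real_vector \<Rightarrow> 'l \<Rightarrow> 'l) \<Rightarrow> bool" where
  "lie_algebra br \<longleftrightarrow>
     (\<forall>x. linear (br x)) \<and> (\<forall>y. linear (\<lambda>x. br x y)) \<and>
     (\<forall>x. br x x = 0) \<and>
     (\<forall>x y z. br x (br y z) + br y (br z x) + br z (br x y) = 0)"

text \<open>Lower central series: lcs br k is l^k (k \<ge> 1); l^0 := l by convention.\<close>
fun lcs :: "('l::real_vector \<Rightarrow> 'l \<Rightarrow> 'l) \<Rightarrow> nat \<Rightarrow> 'l set" where
  "lcs br 0 = UNIV"
| "lcs br (Suc 0) = UNIV"
| "lcs br (Suc (Suc k)) = span {br x y | x y. y \<in> lcs br (Suc k)}"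

definition centre :: "('l::real_vector \<Rightarrow> 'l \<Rightarrow> 'l) \<Rightarrow> 'l set" where
  "centre br = {z. \<forall>x. br x z = 0}"

definition nilpotent_lie :: "('l::real_vector \<Rightarrow> 'l \<Rightarrow> 'l) \<Rightarrow> bool" where
  "nilpotent_lie br \<longleftrightarrow> (\<exists>k. lcs br k = {0})"

definition lin_on :: "'a::real_vector set \<Rightarrow> ('a \<Rightarrow> 'b::real_vector) \<Rightarrow> bool" where
  "lin_on S f \<longleftrightarrow> (\<forall>u\<in>S. \<forall>v\<in>S. f (u + v) = f u + f v) \<and> (\<forall>c. \<forall>u\<in>S. f (c *\<^sub>R u) = c *\<^sub>R f u)"

definition orth_module ::
  "('l::real_vector \<Rightarrow> 'l \<Rightarrow> 'l) \<Rightarrow> 'm::real_vector set \<Rightarrow> ('l \<Rightarrow> 'm \<Rightarrow> 'm) \<Rightarrow> ('m \<Rightarrow> 'm \<Rightarrow> real) \<Rightarrow> bool" where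
  "orth_module br A \<rho> B \<longleftrightarrow>
     subspace A \<and> (\<exists>S. finite S \<and> S \<subseteq> A \<and> span S = A) \<and>
     \<comment> \<open>nondegenerate symmetric bilinear form on A\<close>
     (\<forall>a\<in>A. lin_on A (B a)) \<and> (\<forall>a\<in>A. \<forall>b\<in>A. B a b = B b a) \<and>
     (\<forall>a\<in>A. (\<forall>b\<in>A. B a b = 0) \<longrightarrow> a = 0) \<and>
     \<comment> \<open>representation\<close>
     (\<forall>x. lin_on A (\<rho> x)) \<and> (\<forall>x. \<forall>a\<in>A. \<rho> x a \<in> A) \<and>
     (\<forall>a\<in>A. linear (\<lambda>x. \<rho> x a)) \<and>
     (\<forall>x y. \<forall>a\<in>A. \<rho> (br x y) a = \<rho> x (\<rho> y a) - \<rho> y (\<rho> x a)) \<and>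
     \<comment> \<open>by skew-adjoint maps\<close>
     (\<forall>x. \<forall>a\<in>A. \<forall>b\<in>A. B (\<rho> x a) b = - B a (\<rho> x b))"

definition invariant_sub :: "'m::real_vector set \<Rightarrow> ('l \<Rightarrow> 'm \<Rightarrow> 'm) \<Rightarrow> 'm set \<Rightarrow> bool" where
  "invariant_sub A \<rho> U \<longleftrightarrow> subspace U \<and> U \<subseteq> A \<and> (\<forall>x. \<forall>u\<in>U. \<rho> x u \<in> U)"

text \<open>Semisimple = completely reducible: every submodule has a complementary submodule.\<close>
definition semisimple_module :: "'m::real_vector set \<Rightarrow> ('l \<Rightarrow> 'm \<Rightarrow> 'm) \<Rightarrow> bool" where
  "semisimple_module A \<rho> \<longleftrightarrow>
     (\<forall>U. invariant_sub A \<rho> U \<longrightarrow>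
        (\<exists>W. invariant_sub A \<rho> W \<and> U \<inter> W = {0} \<and> {u + w | u w. u \<in> U \<and> w \<in> W} = A))"

definition invariants :: "'m::real_vector set \<Rightarrow> ('l \<Rightarrow> 'm \<Rightarrow> 'm) \<Rightarrow> 'm set" where
  "invariants A \<rho> = {a \<in> A. \<forall>x. \<rho> x a = 0}"

definition cochain2 :: "'m::real_vector set \<Rightarrow> ('l::real_vector \<Rightarrow> 'l \<Rightarrow> 'm) \<Rightarrow> bool" where
  "cochain2 A \<alpha> \<longleftrightarrow> (\<forall>x y. \<alpha> x y \<in> A) \<and> (\<forall>x. linear (\<alpha> x)) \<and> (\<forall>y. linear (\<lambda>x. \<alpha> x y)) \<and>
     (\<forall>x. \<alpha> x x = 0)"

definition cochain3 :: "('l::real_vector \<Rightarrow> 'l \<Rightarrow> 'l \<Rightarrow> real) \<Rightarrow> bool" where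
  "cochain3 \<gamma> \<longleftrightarrow> (\<forall>x y. linear (\<gamma> x y)) \<and> (\<forall>x z. linear (\<lambda>y. \<gamma> x y z)) \<and>
     (\<forall>y z. linear (\<lambda>x. \<gamma> x y z)) \<and> (\<forall>x z. \<gamma> x x z = 0) \<and> (\<forall>x y. \<gamma> x y y = 0)"

definition d2 :: "('l \<Rightarrow> 'l \<Rightarrow> 'l) \<Rightarrow> ('l \<Rightarrow> 'm \<Rightarrow> 'm::real_vector) \<Rightarrow> ('l \<Rightarrow> 'l \<Rightarrow> 'm) \<Rightarrow> 'l \<Rightarrow> 'l \<Rightarrow> 'l \<Rightarrow> 'm" where
  "d2 br \<rho> \<alpha> x0 x1 x2 =
     \<rho> x0 (\<alpha> x1 x2) - \<rho> x1 (\<alpha> x0 x2) + \<rho> x2 (\<alpha> x0 x1)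
     - \<alpha> (br x0 x1) x2 + \<alpha> (br x0 x2) x1 - \<alpha> (br x1 x2) x0"

definition d3 :: "('l \<Rightarrow> 'l \<Rightarrow> 'l) \<Rightarrow> ('l \<Rightarrow> 'l \<Rightarrow> 'l \<Rightarrow> real) \<Rightarrow> 'l \<Rightarrow> 'l \<Rightarrow> 'l \<Rightarrow> 'l \<Rightarrow> real" where
  "d3 br \<gamma> x0 x1 x2 x3 =
     - \<gamma> (br x0 x1) x2 x3 + \<gamma> (br x0 x2) x1 x3 - \<gamma> (br x0 x3) x1 x2
     - \<gamma> (br x1 x2) x0 x3 + \<gamma> (br x1 x3) x0 x2 - \<gamma> (br x2 x3) x0 x1"

text \<open>One half of the contracted wedge product, 1/2 <alpha \<and> alpha>, with the shuffle convention for \<and>.\<close>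
definition half_wedge :: "('m \<Rightarrow> 'm \<Rightarrow> real) \<Rightarrow> ('l \<Rightarrow> 'l \<Rightarrow> 'm) \<Rightarrow> 'l \<Rightarrow> 'l \<Rightarrow> 'l \<Rightarrow> 'l \<Rightarrow> real" where
  "half_wedge B \<alpha> x0 x1 x2 x3 =
     B (\<alpha> x0 x1) (\<alpha> x2 x3) - B (\<alpha> x0 x2) (\<alpha> x1 x3) + B (\<alpha> x0 x3) (\<alpha> x1 x2)"

definition quad_cocycle ::
  "('l::real_vector \<Rightarrow> 'l \<Rightarrow> 'l) \<Rightarrow> 'm::real_vector set \<Rightarrow> ('l \<Rightarrow> 'm \<Rightarrow> 'm) \<Rightarrow> ('m \<Rightarrow> 'm \<Rightarrow> real)
     \<Rightarrow> ('l \<Rightarrow> 'l \<Rightarrow> 'm) \<Rightarrow> ('l \<Rightarrow> 'l \<Rightarrow> 'l \<Rightarrow> real) \<Rightarrow> bool" where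
  "quad_cocycle br A \<rho> B \<alpha> \<gamma> \<longleftrightarrow> cochain2 A \<alpha> \<and> cochain3 \<gamma> \<and>
     (\<forall>x0 x1 x2. d2 br \<rho> \<alpha> x0 x1 x2 = 0) \<and>
     (\<forall>x0 x1 x2 x3. d3 br \<gamma> x0 x1 x2 x3 = half_wedge B \<alpha> x0 x1 x2 x3)"

definition l_sub :: "('l::real_vector \<Rightarrow> 'l \<Rightarrow> 'l) \<Rightarrow> 'm::real_vector set \<Rightarrow> ('l \<Rightarrow> 'm \<Rightarrow> 'm) \<Rightarrow> nat \<Rightarrow> 'l set" where
  "l_sub br A \<rho> k = (if k = 0 then centre br \<inter> {x. \<forall>a\<in>A. \<rho> x a = 0}
                      else centre br \<inter> lcs br (k + 1))"

definition cond_A ::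
  "('l::real_vector \<Rightarrow> 'l \<Rightarrow> 'l) \<Rightarrow> 'm::real_vector set \<Rightarrow> ('l \<Rightarrow> 'm \<Rightarrow> 'm) \<Rightarrow> ('m \<Rightarrow> 'm \<Rightarrow> real)
     \<Rightarrow> ('l \<Rightarrow> 'l \<Rightarrow> 'm) \<Rightarrow> ('l \<Rightarrow> 'l \<Rightarrow> 'l \<Rightarrow> real) \<Rightarrow> nat \<Rightarrow> bool" where
  "cond_A br A \<rho> B \<alpha> \<gamma> k \<longleftrightarrow>
     (\<forall>L0 \<in> l_sub br A \<rho> k.
        (\<exists>A0\<in>A. \<exists>Z0. lin_on (lcs br (k + 1)) Z0 \<and>
            (\<forall>L. \<alpha> L L0 = 0) \<and>
            (\<forall>L. \<forall>w\<in>lcs br (k + 1). \<gamma> L L0 w = - B A0 (\<alpha> L w) + Z0 (br L w)))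
        \<longrightarrow> L0 = 0)"

text \<open>Image under alpha of the kernel of the bracket map l \<otimes> l^(k+1) \<rightarrow> l
  (elements of the tensor product written as finite sums of pure tensors).\<close>
definition alpha_ker :: "('l::real_vector \<Rightarrow> 'l \<Rightarrow> 'l) \<Rightarrow> ('l \<Rightarrow> 'l \<Rightarrow> 'm::real_vector) \<Rightarrow> nat \<Rightarrow> 'm set" where
  "alpha_ker br \<alpha> k =
     {(\<Sum>i<N. \<alpha> (x i) (y i)) | (N::nat) x y.
        (\<forall>i<N. y i \<in> lcs br (k + 1)) \<and> (\<Sum>i<N. br (x i) (y i)) = 0}"

definition nondeg_sub :: "('m \<Rightarrow> 'm \<Rightarrow> real) \<Rightarrow> 'm::real_vector set \<Rightarrow> bool" where
  "nondeg_sub B W \<longleftrightarrow> (\<forall>w\<in>W. (\<forall>v\<in>W. B w v = 0) \<longrightarrow> w = 0)"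

definition cond_B :: "('l::real_vector \<Rightarrow> 'l \<Rightarrow> 'l) \<Rightarrow> ('m \<Rightarrow> 'm \<Rightarrow> real) \<Rightarrow> ('l \<Rightarrow> 'l \<Rightarrow> 'm::real_vector) \<Rightarrow> nat \<Rightarrow> bool" where
  "cond_B br B \<alpha> k \<longleftrightarrow> nondeg_sub B (alpha_ker br \<alpha> k)"

definition admits_admissible_class ::
  "('l::real_vector \<Rightarrow> 'l \<Rightarrow> 'l) \<Rightarrow> 'm::real_vector set \<Rightarrow> ('l \<Rightarrow> 'm \<Rightarrow> 'm) \<Rightarrow> ('m \<Rightarrow> 'm \<Rightarrow> real) \<Rightarrow> bool" where
  "admits_admissible_class br A \<rho> B \<longleftrightarrow>
     (\<exists>\<alpha> \<gamma>. quad_cocycle br A \<rho> B \<alpha> \<gamma> \<and> (\<forall>x y. \<alpha> x y \<in> invariants A \<rho>) \<and>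
        (\<exists>m. lcs br (m + 2) = {0} \<and>
           (\<forall>k\<le>m. cond_A br A \<rho> B \<alpha> \<gamma> k \<and> cond_B br B \<alpha> k)))"

text \<open>l is admissible: some semisimple orthogonal l-module admits an admissible class.
  The module is realised as a finite-dimensional subspace of the real vector space type 'm.\<close>
definition admissible_lie :: "('l::real_vector \<Rightarrow> 'l \<Rightarrow> 'l) \<Rightarrow> 'm::real_vector itself \<Rightarrow> bool" where
  "admissible_lie br _ \<longleftrightarrow>
     (\<exists>(A::'m set) \<rho> B. orth_module br A \<rho> B \<and> semisimple_module A \<rho> \<and> admits_admissible_class br A \<rho> B)"

end

theory Submission imports Defs begin

text \<open>Write L = [X3, Xj] = a Y + b Z in the central plane l' = span {Y, Z} = l^2 and use the
  admissibility conditions (A_1) and (B_1). Since \<alpha> takes invariant values, d\<alpha> = 0 says that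
  \<alpha> x [y, z] is cyclically alternating; with the given brackets this shows \<alpha>(l, Z) \<subseteq> \<alpha>(l, Y).
  Evaluating d\<gamma> = 1/2 <\<alpha> \<and> \<alpha>> on (x, y, w, w') with w, w' \<in> l' (where \<gamma> vanishes, l' being
  two-dimensional) gives the symmetry B(\<alpha>(x, w), \<alpha>(y, w')) = B(\<alpha>(y, w), \<alpha>(x, w')).
  By (B_1), an element of \<alpha>(l, l') orthogonal to \<alpha>(l, Y) is zero; this yields first
  \<alpha>(Xj, Z) = 0 and then \<alpha>(l, L) = 0. If b \<noteq> 0, d\<gamma> on (Xj, a X2 + b X3, x, Y) shows that L
  violates (A_1); if b = 0 but a \<noteq> 0, then \<alpha>(l, Y) = 0 and d\<gamma> on (X1, X2, x, Z) shows that Y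
  violates (A_1).\<close>

declare One_nat_def [simp del] \<comment> \<open>keeps X 1 from turning into X (Suc 0), which would block
  the bracket relations as rewrite rules\<close>

lemma bilinear_alternating_antisym:
  assumes "bilinear f" and "\<And>x. f x x = 0"
  shows "f x y = - f y x"
proof -
  have "0 = f (x + y) (x + y)" using assms(2) by simp
  also have "\<dots> = f x x + f x y + f y x + f y y"
    using assms(1) by (simp add: bilinear_ladd bilinear_radd)
  finally show ?thesis using assms(2) by (simp add: eq_neg_iff_add_eq_0)
qed

lemma mem_span_pair_iff: "w \<in> span {u, v} \<longleftrightarrow> (\<exists>s t. w = s *\<^sub>R u + t *\<^sub>R v)"
proof
  assume "w \<in> span {u, v}"
  then obtain s where "w - s *\<^sub>R u \<in> span {v}" by (auto simp: real_vector.span_breakdown_eq)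
  then obtain t where "w - s *\<^sub>R u = t *\<^sub>R v" by (auto simp: real_vector.span_singleton)
  then show "\<exists>s t. w = s *\<^sub>R u + t *\<^sub>R v" by (metis diff_add_cancel add.commute)
next
  assume "\<exists>s t. w = s *\<^sub>R u + t *\<^sub>R v"
  then show "w \<in> span {u, v}"
    by (auto intro: real_vector.span_add real_vector.span_scale real_vector.span_base)
qed

lemma subspace_eq_span_pair:
  assumes "subspace V" "dim V = 2" "u \<in> V" "v \<in> V" "independent {u, v}" "u \<noteq> v"
  shows "V = span {u, v}"
proof
  obtain B where B: "B \<subseteq> V" "independent B" "V \<subseteq> span B" "card B = 2"
    using real_vector.basis_exists[of V] assms(2) by metis
  show "V \<subseteq> span {u, v}"
  proof
    fix w assume "w \<in> V"
    show "w \<in> span {u, v}"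
    proof (rule ccontr)
      assume w: "w \<notin> span {u, v}"
      then have "independent {w, u, v}" "card {w, u, v} = 3"
        using assms(5,6) real_vector.span_base[of w "{u, v}"]
        by (auto simp: real_vector.independent_insert card_insert_if)
      moreover have "{w, u, v} \<subseteq> span B" using \<open>w \<in> V\<close> assms(3,4) B(3) by auto
      ultimately show False
        using real_vector.independent_span_bound[of B "{w, u, v}"] B(4) card.infinite by force
    qed
  qed
  show "span {u, v} \<subseteq> V"
    using assms by (intro real_vector.span_minimal) auto
qed

lemma distinct_if_card_image_Un_pair:
  assumes "finite I" and "card (f ` I \<union> {u, v}) = card I + 2"
  shows "u \<noteq> v"
proof
  assume "u = v"
  then have "card (f ` I \<union> {u, v}) \<le> card (f ` I) + 1"
    using card_Un_le[of "f ` I" "{u}"] by simp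
  also have "\<dots> \<le> card I + 1"
    using card_image_le[OF assms(1)] by simp
  finally show False using assms(2) by simp
qed

lemma lcs_two: "lcs br 2 = span {br x y | x y. True}"
  by (simp add: numeral_2_eq_2)

lemma bracket_mem_lcs_two: "br x y \<in> lcs br 2"
  by (auto simp: lcs_two intro: real_vector.span_base)

lemma subspace_lcs_two: "subspace (lcs br 2)"
  by (simp add: lcs_two)

lemma alpha_mem_alpha_ker:
  assumes "w \<in> lcs br (k + 1)" and "w \<in> centre br"
  shows "\<alpha> x w \<in> alpha_ker br \<alpha> k"
  unfolding alpha_ker_def
proof (intro CollectI exI conjI)
  show "\<alpha> x w = (\<Sum>i<(1::nat). \<alpha> ((\<lambda>_. x) i) ((\<lambda>_. w) i))"
    by (simp add: One_nat_def)
  show "\<forall>i<1. (\<lambda>_. w) i \<in> lcs br (k + 1)"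
    using assms(1) by simp
  show "(\<Sum>i<(1::nat). br ((\<lambda>_. x) i) ((\<lambda>_. w) i)) = 0"
    using assms(2) by (simp add: centre_def One_nat_def)
qed

lemma cond_A_eq_zero:
  assumes "cond_A br A \<rho> B \<alpha> \<gamma> k" and "M \<in> l_sub br A \<rho> k" and "A0 \<in> A"
    and "\<And>L. \<alpha> L M = 0" and "\<And>L w. w \<in> lcs br (k + 1) \<Longrightarrow> \<gamma> L M w = - B A0 (\<alpha> L w)"
  shows "M = 0"
proof -
  have "lin_on (lcs br (k + 1)) (\<lambda>_. 0)" by (simp add: lin_on_def)
  then show ?thesis
    using assms unfolding cond_A_def by (metis add.right_neutral)
qed

locale invariant_quad_cocycle =
  fixes br :: "'l::real_vector \<Rightarrow> 'l \<Rightarrow> 'l" and A :: "'m::real_vector set"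
    and \<rho> :: "'l \<Rightarrow> 'm \<Rightarrow> 'm" and B :: "'m \<Rightarrow> 'm \<Rightarrow> real"
    and \<alpha> :: "'l \<Rightarrow> 'l \<Rightarrow> 'm" and \<gamma> :: "'l \<Rightarrow> 'l \<Rightarrow> 'l \<Rightarrow> real"
  assumes lie: "lie_algebra br"
    and orth: "orth_module br A \<rho> B"
    and cocycle: "quad_cocycle br A \<rho> B \<alpha> \<gamma>"
    and invariant: "\<forall>x y. \<alpha> x y \<in> invariants A \<rho>"
begin

lemma bilinear_bracket: "bilinear br"
  using lie by (simp add: lie_algebra_def bilinear_def)

lemma bracket_antisym: "br x y = - br y x"
  using lie by (intro bilinear_alternating_antisym bilinear_bracket) (simp add: lie_algebra_def)

lemma bilinear_alpha: "bilinear \<alpha>"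
  using cocycle by (simp add: quad_cocycle_def cochain2_def bilinear_def)

lemma alpha_in_A [simp]: "\<alpha> x y \<in> A"
  using cocycle by (simp add: quad_cocycle_def cochain2_def)

lemma alpha_self [simp]: "\<alpha> x x = 0"
  using cocycle by (simp add: quad_cocycle_def cochain2_def)

lemma alpha_antisym: "\<alpha> x y = - \<alpha> y x"
  by (rule bilinear_alternating_antisym[OF bilinear_alpha alpha_self])

lemma bilinear_gamma_left: "bilinear (\<lambda>x y. \<gamma> x y z)"
  using cocycle by (simp add: quad_cocycle_def cochain3_def bilinear_def)

lemma bilinear_gamma_right: "bilinear (\<gamma> x)"
  using cocycle by (simp add: quad_cocycle_def cochain3_def bilinear_def)

lemma gamma_repeat_left [simp]: "\<gamma> x x z = 0"
  and gamma_repeat_right [simp]: "\<gamma> x y y = 0"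
  using cocycle by (simp_all add: quad_cocycle_def cochain3_def)

lemma gamma_swap_left: "\<gamma> x y z = - \<gamma> y x z"
  by (rule bilinear_alternating_antisym[OF bilinear_gamma_left gamma_repeat_left])

lemma gamma_swap_right: "\<gamma> x y z = - \<gamma> x z y"
  by (rule bilinear_alternating_antisym[OF bilinear_gamma_right gamma_repeat_right])

lemma gamma_repeat_outer [simp]: "\<gamma> x y x = 0"
  using gamma_swap_right[of x y x] by simp

lemma gamma_cyclic: "\<gamma> x y z = \<gamma> y z x"
  using gamma_swap_left[of x y z] gamma_swap_right[of y x z] by simp

lemma gamma_swap_outer: "\<gamma> x y z = - \<gamma> z y x"
  using gamma_cyclic[of x y z] gamma_swap_left[of y z x] by simp

lemmas bracket_expand = bilinear_ladd[OF bilinear_bracket] bilinear_radd[OF bilinear_bracket]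
  bilinear_lmul[OF bilinear_bracket] bilinear_rmul[OF bilinear_bracket]
  bilinear_lzero[OF bilinear_bracket] bilinear_rzero[OF bilinear_bracket]

lemmas alpha_expand = bilinear_ladd[OF bilinear_alpha] bilinear_radd[OF bilinear_alpha]
  bilinear_lmul[OF bilinear_alpha] bilinear_rmul[OF bilinear_alpha]
  bilinear_lneg[OF bilinear_alpha] bilinear_rneg[OF bilinear_alpha]
  bilinear_lzero[OF bilinear_alpha] bilinear_rzero[OF bilinear_alpha]

lemmas gamma_expand = bilinear_ladd[OF bilinear_gamma_left] bilinear_radd[OF bilinear_gamma_left]
  bilinear_radd[OF bilinear_gamma_right]
  bilinear_lmul[OF bilinear_gamma_left] bilinear_rmul[OF bilinear_gamma_left]
  bilinear_rmul[OF bilinear_gamma_right]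
  bilinear_lneg[OF bilinear_gamma_left] bilinear_rneg[OF bilinear_gamma_left]
  bilinear_rneg[OF bilinear_gamma_right]
  bilinear_lzero[OF bilinear_gamma_left] bilinear_rzero[OF bilinear_gamma_left]
  bilinear_rzero[OF bilinear_gamma_right]

lemma alpha_cyclic: "\<alpha> x (br y z) + \<alpha> y (br z x) + \<alpha> z (br x y) = 0"
proof -
  have "\<rho> u (\<alpha> v w) = 0" for u v w
    using invariant by (simp add: invariants_def)
  then have "0 = d2 br \<rho> \<alpha> x y z + \<alpha> (br x y) z - \<alpha> (br x z) y + \<alpha> (br y z) x"
    by (simp add: d2_def)
  also have "d2 br \<rho> \<alpha> x y z = 0"
    using cocycle by (simp add: quad_cocycle_def)
  also have "\<alpha> (br x z) y = \<alpha> y (br z x)"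
    using bracket_antisym[of x z] alpha_antisym[of "br z x" y] by (simp add: alpha_expand)
  also have "\<alpha> (br x y) z = - \<alpha> z (br x y)"
    by (rule alpha_antisym)
  also have "\<alpha> (br y z) x = - \<alpha> x (br y z)"
    by (rule alpha_antisym)
  finally show ?thesis by (simp add: algebra_simps)
qed

lemma gamma_cocycle: "d3 br \<gamma> x0 x1 x2 x3 = half_wedge B \<alpha> x0 x1 x2 x3"
  using cocycle by (simp add: quad_cocycle_def)

lemma subspace_range_alpha: "subspace (range (\<lambda>x. \<alpha> x y))"
  using bilinear_alpha by (intro real_vector.linear_subspace_image) (auto simp: bilinear_def)

lemma subspace_alpha_vimage: "subspace S \<Longrightarrow> subspace {x. \<alpha> x y \<in> S}"
  using real_vector.linear_subspace_vimage[of "\<lambda>x. \<alpha> x y" S] bilinear_alpha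
  by (simp add: bilinear_def vimage_def)

lemma subspace_A: "subspace A"
  using orth by (simp add: orth_module_def)

lemma B_sym: "u \<in> A \<Longrightarrow> v \<in> A \<Longrightarrow> B u v = B v u"
  using orth by (simp add: orth_module_def)

lemma B_add_right: "c \<in> A \<Longrightarrow> u \<in> A \<Longrightarrow> v \<in> A \<Longrightarrow> B c (u + v) = B c u + B c v"
  using orth by (simp add: orth_module_def lin_on_def)

lemma B_scale_right: "c \<in> A \<Longrightarrow> u \<in> A \<Longrightarrow> B c (s *\<^sub>R u) = s * B c u"
  using orth by (simp add: orth_module_def lin_on_def)

lemma B_scale_left: "c \<in> A \<Longrightarrow> u \<in> A \<Longrightarrow> B (s *\<^sub>R c) u = s * B c u"
  using B_sym B_scale_right subspace_A by (metis real_vector.subspace_scale)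

lemma B_zero_right [simp]: "c \<in> A \<Longrightarrow> B c 0 = 0"
  using B_scale_right[of c 0 0] subspace_A by (simp add: real_vector.subspace_0)

lemma B_zero_left [simp]: "u \<in> A \<Longrightarrow> B 0 u = 0"
  using B_sym B_zero_right subspace_A by (metis real_vector.subspace_0)

lemma subspace_orthogonal: "c \<in> A \<Longrightarrow> subspace {v \<in> A. B c v = 0}"
  using subspace_A
  by (auto simp: real_vector.subspace_def B_add_right B_scale_right)

lemma alpha_ker_subset_A: "alpha_ker br \<alpha> k \<subseteq> A"
  using subspace_A by (auto simp: alpha_ker_def intro: real_vector.subspace_sum)

lemma alpha_ker_orthogonal_eq_zero:
  assumes "cond_B br B \<alpha> k" and c: "c \<in> alpha_ker br \<alpha> k"
    and orthogonal: "\<And>x w. w \<in> lcs br (k + 1) \<Longrightarrow> B c (\<alpha> x w) = 0"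
  shows "c = 0"
proof -
  have "c \<in> A" using c alpha_ker_subset_A by blast
  have "B c v = 0" if v: "v \<in> alpha_ker br \<alpha> k" for v
  proof -
    obtain N :: nat and x y where v: "v = (\<Sum>i<N. \<alpha> (x i) (y i))"
      and y: "\<forall>i<N. y i \<in> lcs br (k + 1)"
      using v unfolding alpha_ker_def by blast
    have "v \<in> {v \<in> A. B c v = 0}"
      unfolding v using subspace_orthogonal[OF \<open>c \<in> A\<close>] y orthogonal
      by (intro real_vector.subspace_sum) auto
    then show ?thesis by simp
  qed
  then show ?thesis
    using assms(1) c unfolding cond_B_def nondeg_sub_def by blast
qed

lemma alpha_central_derived:
  assumes "z \<in> centre br" and "w \<in> lcs br 2"
  shows "\<alpha> z w = 0"
proof (rule real_vector.linear_eq_0_on_span[of "\<alpha> z"])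
  show "linear (\<alpha> z)" using bilinear_alpha by (simp add: bilinear_def)
  show "w \<in> span {br x y | x y. True}" using assms(2) by (simp add: lcs_two)
  show "\<alpha> z u = 0" if u: "u \<in> {br x y | x y. True}" for u
  proof -
    obtain x y where u: "u = br x y" using u by blast
    have "br x z = 0" "br y z = 0" using assms(1) by (simp_all add: centre_def)
    then show ?thesis
      using alpha_cyclic[of x y z] bracket_antisym[of z x] u by (simp add: alpha_expand)
  qed
qed

end

locale two_dim_central_derived = invariant_quad_cocycle +
  fixes Y Z :: "'l::real_vector"
  assumes derived_eq: "lcs br 2 = span {Y, Z}"
    and derived_central: "lcs br 2 \<subseteq> centre br"
    and cond_A_1: "cond_A br A \<rho> B \<alpha> \<gamma> 1"
    and cond_B_1: "cond_B br B \<alpha> 1"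
begin

lemma bracket_derived_right [simp]: "w \<in> lcs br 2 \<Longrightarrow> br x w = 0"
  using derived_central by (auto simp: centre_def)

lemma bracket_derived_left [simp]: "w \<in> lcs br 2 \<Longrightarrow> br w x = 0"
  using bracket_antisym[of w x] by simp

lemma Y_derived [simp]: "Y \<in> lcs br 2" and Z_derived [simp]: "Z \<in> lcs br 2"
  by (simp_all add: derived_eq real_vector.span_base)

lemma alpha_derived_derived [simp]: "w \<in> lcs br 2 \<Longrightarrow> w' \<in> lcs br 2 \<Longrightarrow> \<alpha> w w' = 0"
  using derived_central by (auto intro: alpha_central_derived)

lemma alpha_derived_mem_subspace:
  assumes "subspace S" "\<alpha> u Y \<in> S" "\<alpha> u Z \<in> S" "w \<in> lcs br 2"
  shows "\<alpha> u w \<in> S"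
  using assms unfolding derived_eq mem_span_pair_iff
  by (auto simp: alpha_expand intro!: real_vector.subspace_add real_vector.subspace_scale)

lemma gamma_derived:
  assumes "w1 \<in> lcs br 2" "w2 \<in> lcs br 2" "w3 \<in> lcs br 2"
  shows "\<gamma> w1 w2 w3 = 0"
  using assms unfolding derived_eq mem_span_pair_iff by (auto simp: gamma_expand)

lemma B_alpha_derived_swap:
  assumes w: "w \<in> lcs br 2" and w': "w' \<in> lcs br 2"
  shows "B (\<alpha> x w) (\<alpha> y w') = B (\<alpha> y w) (\<alpha> x w')"
proof -
  have "d3 br \<gamma> x y w w' = - \<gamma> (br x y) w w'"
    using w w' by (simp add: d3_def gamma_expand)
  also have "\<dots> = 0"
    using w w' by (simp add: gamma_derived bracket_mem_lcs_two)
  finally have "half_wedge B \<alpha> x y w w' = 0"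
    using gamma_cocycle by simp
  then show ?thesis
    using w w' B_sym by (simp add: half_wedge_def)
qed

lemma alpha_mem_alpha_ker_1: "w \<in> lcs br 2 \<Longrightarrow> \<alpha> x w \<in> alpha_ker br \<alpha> 1"
  using derived_central by (intro alpha_mem_alpha_ker) auto

lemma orthogonal_alpha_ker_eq_zero:
  assumes c: "c \<in> alpha_ker br \<alpha> 1"
    and "\<And>x. B c (\<alpha> x Y) = 0" and "\<And>x. B c (\<alpha> x Z) = 0"
  shows "c = 0"
proof (rule alpha_ker_orthogonal_eq_zero[OF cond_B_1 c])
  fix x w assume "w \<in> lcs br (1 + 1)"
  then obtain s t where "w = s *\<^sub>R Y + t *\<^sub>R Z"
    by (auto simp: derived_eq mem_span_pair_iff)
  moreover have "c \<in> A" using c alpha_ker_subset_A by blast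
  ultimately show "B c (\<alpha> x w) = 0"
    using assms(2,3) subspace_A
    by (simp add: alpha_expand B_add_right B_scale_right real_vector.subspace_scale)
qed

lemma derived_eq_zero_by_cond_A:
  assumes M: "M \<in> lcs br 2" and "A0 \<in> A" and alpha_M: "\<And>L. \<alpha> L M = 0"
    and span_M: "lcs br 2 \<subseteq> span {M, w0}" and gamma_M: "\<And>L. \<gamma> L M w0 = - B A0 (\<alpha> L w0)"
  shows "M = 0"
proof (rule cond_A_eq_zero[OF cond_A_1 _ \<open>A0 \<in> A\<close> alpha_M])
  show "M \<in> l_sub br A \<rho> 1"
    using M derived_central by (auto simp: l_sub_def)
  fix L w assume "w \<in> lcs br (1 + 1)"
  then have "w \<in> span {M, w0}" using span_M by auto
  then obtain s t where "w = s *\<^sub>R M + t *\<^sub>R w0"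
    unfolding mem_span_pair_iff by blast
  then show "\<gamma> L M w = - B A0 (\<alpha> L w)"
    using gamma_M[of L] alpha_M[of L] \<open>A0 \<in> A\<close>
    by (simp add: gamma_expand alpha_expand B_scale_right)
qed

end

locale basis_configuration = two_dim_central_derived +
  fixes X :: "nat \<Rightarrow> 'l::real_vector" and n :: nat
  assumes basis_span: "span (X ` {1..n} \<union> {Y, Z}) = UNIV"
    and bracket_12: "br (X 1) (X 2) = Y" and bracket_13: "br (X 1) (X 3) = Z"
    and bracket_23: "br (X 2) (X 3) = 0" and bracket_14: "br (X 1) (X 4) = 0"
    and bracket_24: "br (X 2) (X 4) = Z"
    and bracket_1k: "\<And>k. 5 \<le> k \<Longrightarrow> k \<le> n \<Longrightarrow> br (X 1) (X k) = 0"
    and bracket_2k: "\<And>k. 5 \<le> k \<Longrightarrow> k \<le> n \<Longrightarrow> br (X 2) (X k) = 0"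
begin

lemma subspace_property_by_basis:
  assumes "subspace {x. P x}" "P (X 1)" "P (X 2)" "P (X 3)" "P (X 4)"
    "\<And>k. 5 \<le> k \<Longrightarrow> k \<le> n \<Longrightarrow> P (X k)" "P Y" "P Z"
  shows "P x"
proof -
  have "P (X k)" if "k \<in> {1..n}" for k
  proof -
    have "k \<in> {1, 2, 3, 4} \<or> 5 \<le> k \<and> k \<le> n" using that by auto
    then show ?thesis using assms(2-6) by auto
  qed
  then have "X ` {1..n} \<union> {Y, Z} \<subseteq> {x. P x}" using assms(7,8) by auto
  then show ?thesis
    using real_vector.span_minimal[OF _ assms(1)] basis_span by blast
qed

lemma alpha_Y_of_commuting:
  assumes "br (X 1) (X k) = 0" "br (X 2) (X k) = 0"
  shows "\<alpha> (X k) Y = 0"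
  using alpha_cyclic[of "X 1" "X 2" "X k"] assms bracket_antisym[of "X k" "X 1"]
  by (simp add: bracket_12 alpha_expand)

lemma alpha_X3_Y: "\<alpha> (X 3) Y = \<alpha> (X 2) Z"
  using alpha_cyclic[of "X 1" "X 2" "X 3"] bracket_antisym[of "X 3" "X 1"]
  by (simp add: bracket_12 bracket_13 bracket_23 alpha_expand)

lemma alpha_X4_Y: "\<alpha> (X 4) Y = - \<alpha> (X 1) Z"
  using alpha_cyclic[of "X 1" "X 2" "X 4"] bracket_antisym[of "X 4" "X 1"]
  by (simp add: bracket_12 bracket_14 bracket_24 alpha_expand add_eq_0_iff2)

lemma alpha_X3_Z: "\<alpha> (X 3) Z = \<alpha> (X 2) (br (X 3) (X 4))"
  using alpha_cyclic[of "X 2" "X 3" "X 4"] bracket_antisym[of "X 4" "X 2"]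
  by (simp add: bracket_23 bracket_24 alpha_expand)

lemma alpha_Z_of_commuting:
  assumes "br (X 1) (X k) = 0"
  shows "\<alpha> (X k) Z = - \<alpha> (X 1) (br (X 3) (X k))"
  using alpha_cyclic[of "X 1" "X 3" "X k"] assms bracket_antisym[of "X k" "X 1"]
  by (simp add: bracket_13 alpha_expand add_eq_0_iff2)

lemma alpha_X2_bracket_X3:
  assumes "br (X 2) (X k) = 0"
  shows "\<alpha> (X 2) (br (X 3) (X k)) = 0"
  using alpha_cyclic[of "X 2" "X 3" "X k"] assms bracket_antisym[of "X k" "X 2"]
  by (simp add: bracket_23 alpha_expand)

lemma alpha_Z_mem_range_alpha_Y: "\<alpha> x Z \<in> range (\<lambda>x. \<alpha> x Y)"
proof -
  let ?R = "range (\<lambda>x. \<alpha> x Y)"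
  have R: "subspace ?R" by (rule subspace_range_alpha)
  have "\<alpha> (X 1) Z = \<alpha> (- X 4) Y"
    by (simp add: alpha_expand alpha_X4_Y)
  then have X1_Z: "\<alpha> (X 1) Z \<in> ?R" by (metis rangeI)
  have X2_Z: "\<alpha> (X 2) Z \<in> ?R"
    using alpha_X3_Y by (metis rangeI)
  have X1: "\<alpha> (X 1) w \<in> ?R" and X2: "\<alpha> (X 2) w \<in> ?R" if "w \<in> lcs br 2" for w
    using that X1_Z X2_Z by (auto intro: alpha_derived_mem_subspace[OF R])
  show ?thesis
  proof (rule subspace_property_by_basis[where P = "\<lambda>x. \<alpha> x Z \<in> ?R"])
    show "subspace {x. \<alpha> x Z \<in> ?R}"
      using R by (rule subspace_alpha_vimage)
    show "\<alpha> (X 3) Z \<in> ?R" "\<alpha> (X 4) Z \<in> ?R"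
      using alpha_X3_Z alpha_Z_of_commuting[OF bracket_14] X1 X2 R
      by (auto simp: bracket_mem_lcs_two real_vector.subspace_neg)
    show "\<alpha> (X k) Z \<in> ?R" if "5 \<le> k" "k \<le> n" for k
      using alpha_Z_of_commuting[OF bracket_1k[OF that]] X1 R
      by (auto simp: bracket_mem_lcs_two real_vector.subspace_neg)
  qed (use X1_Z X2_Z R real_vector.subspace_0 in auto)
qed

lemma orthogonal_alpha_Y_eq_zero:
  assumes "c \<in> alpha_ker br \<alpha> 1" and orth_Y: "\<And>x. B c (\<alpha> x Y) = 0"
  shows "c = 0"
proof (rule orthogonal_alpha_ker_eq_zero[OF assms])
  fix x
  obtain x' where "\<alpha> x Z = \<alpha> x' Y" using alpha_Z_mem_range_alpha_Y[of x] by blast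
  then show "B c (\<alpha> x Z) = 0" using orth_Y by simp
qed

lemma alpha_Xk_Z:
  assumes "5 \<le> k" "k \<le> n"
  shows "\<alpha> (X k) Z = 0"
proof (rule orthogonal_alpha_Y_eq_zero)
  show "\<alpha> (X k) Z \<in> alpha_ker br \<alpha> 1" by (simp add: alpha_mem_alpha_ker_1)
  have "\<alpha> (X k) Y = 0" using assms by (simp add: alpha_Y_of_commuting bracket_1k bracket_2k)
  then show "B (\<alpha> (X k) Z) (\<alpha> x Y) = 0" for x
    using B_alpha_derived_swap[of Y Z x "X k"] B_sym by simp
qed

lemma alpha_bracket_X3_Xk:
  assumes k: "5 \<le> k" "k \<le> n"
  shows "\<alpha> y (br (X 3) (X k)) = 0"
proof (rule orthogonal_alpha_Y_eq_zero)
  let ?L = "br (X 3) (X k)"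
  let ?c = "\<alpha> y ?L"
  show "?c \<in> alpha_ker br \<alpha> 1" by (simp add: alpha_mem_alpha_ker_1 bracket_mem_lcs_two)
  \<comment> \<open>by the swap identity, B (\<alpha> y L) (\<alpha> x w) = B (\<alpha> y w) (\<alpha> x L)\<close>
  have orth: "B ?c (\<alpha> x w) = 0" if "\<alpha> x ?L = 0" "w \<in> lcs br 2" for x w
    using B_alpha_derived_swap[of w ?L y x] B_sym that by (simp add: bracket_mem_lcs_two)
  have X1: "\<alpha> (X 1) ?L = 0"
    using alpha_Z_of_commuting[OF bracket_1k] alpha_Xk_Z k by simp
  have X2: "\<alpha> (X 2) ?L = 0"
    using alpha_X2_bracket_X3[OF bracket_2k] k by simp
  show "B ?c (\<alpha> x Y) = 0" for x
  proof (rule subspace_property_by_basis[where P = "\<lambda>x. B ?c (\<alpha> x Y) = 0"])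
    show "subspace {x. B ?c (\<alpha> x Y) = 0}"
      using subspace_alpha_vimage[OF subspace_orthogonal[of ?c], of Y] by simp
    show "B ?c (\<alpha> (X 1) Y) = 0" "B ?c (\<alpha> (X 2) Y) = 0" "B ?c (\<alpha> (X 3) Y) = 0"
      using orth X1 X2 by (simp_all add: alpha_X3_Y)
    show "B ?c (\<alpha> (X 4) Y) = 0"
      using orth[OF X1, of Z] B_scale_right[of ?c "\<alpha> (X 1) Z" "-1"] by (simp add: alpha_X4_Y)
    show "B ?c (\<alpha> (X j) Y) = 0" if "5 \<le> j" "j \<le> n" for j
      using that by (simp add: alpha_Y_of_commuting bracket_1k bracket_2k)
  qed simp_all
qed

lemma Y_eq_zero_if_alpha_Y_zero:
  assumes alpha_Y: "\<And>x. \<alpha> x Y = 0"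
  shows "Y = 0"
proof (rule derived_eq_zero_by_cond_A[of Y "- \<alpha> (X 1) (X 2)" Z])
  have X1_Z: "\<alpha> (X 1) Z = 0" and X2_Z: "\<alpha> (X 2) Z = 0"
    using alpha_X4_Y alpha_X3_Y alpha_Y by (metis neg_0_equal_iff_equal)+
  have "\<gamma> Z (X 2) Y = 0"
    using gamma_cocycle[of "X 1" "X 2" "X 3" Y] alpha_Y gamma_swap_outer[of Y "X 3" Y]
    by (simp add: d3_def half_wedge_def bracket_12 bracket_13 bracket_23 gamma_expand)
  moreover have "\<gamma> Z (X 1) Y = 0"
    using gamma_cocycle[of "X 1" "X 2" "X 4" Y] alpha_Y
    by (simp add: d3_def half_wedge_def bracket_12 bracket_14 bracket_24 gamma_expand)
  ultimately have "\<gamma> w (X 1) Z = 0" "\<gamma> w (X 2) Z = 0" if "w \<in> lcs br 2" for w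
    using that gamma_swap_outer[of Y _ Z]
    by (auto simp: derived_eq mem_span_pair_iff gamma_expand)
  then show "\<gamma> L Y Z = - B (- \<alpha> (X 1) (X 2)) (\<alpha> L Z)" for L
    using gamma_cocycle[of "X 1" "X 2" L Z] X1_Z X2_Z gamma_swap_left[of L Y Z]
      B_scale_left[of "\<alpha> (X 1) (X 2)" "\<alpha> L Z" "-1"]
    by (simp add: d3_def half_wedge_def bracket_12 bracket_mem_lcs_two gamma_expand)
qed (auto simp: alpha_Y derived_eq[symmetric] real_vector.subspace_neg[OF subspace_A])

lemma gamma_Xk_bracket_X3_Xk:
  assumes k: "5 \<le> k" "k \<le> n"
  shows "\<gamma> (X k) (br (X 3) (X k)) Y = 0"
proof -
  have "\<gamma> Y (X k) (br (X 3) (X k)) = 0"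
    using gamma_cocycle[of "X 1" "X 2" "X k" "br (X 3) (X k)"] alpha_bracket_X3_Xk[OF k]
    by (simp add: d3_def half_wedge_def bracket_12 bracket_1k bracket_2k k bracket_mem_lcs_two
        gamma_expand)
  then show ?thesis using gamma_cyclic[of Y "X k"] by simp
qed

lemma gamma_Y_X3_bracket_X3_Xk:
  assumes k: "5 \<le> k" "k \<le> n"
  shows "\<gamma> Y (X 3) (br (X 3) (X k)) = \<gamma> Z (X 2) (br (X 3) (X k))"
  using gamma_cocycle[of "X 1" "X 2" "X 3" "br (X 3) (X k)"] alpha_bracket_X3_Xk[OF k]
  by (simp add: d3_def half_wedge_def bracket_12 bracket_13 bracket_23 bracket_mem_lcs_two
      gamma_expand)

lemma bracket_X3_Xk_eq_zero_if_Z_coeff_nonzero: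
  assumes k: "5 \<le> k" "k \<le> n" and L_coords: "br (X 3) (X k) = a *\<^sub>R Y + b *\<^sub>R Z" and "b \<noteq> 0"
  shows "br (X 3) (X k) = 0"
proof -
  define L where "L = br (X 3) (X k)"
  define U where "U = a *\<^sub>R X 2 + b *\<^sub>R X 3"
  have L: "L \<in> lcs br 2" by (simp add: L_def bracket_mem_lcs_two)
  have alpha_L: "\<alpha> x L = 0" for x using alpha_bracket_X3_Xk[OF k] by (simp add: L_def)
  have "Z = (1 / b) *\<^sub>R L + (- a / b) *\<^sub>R Y"
    using \<open>b \<noteq> 0\<close> by (simp add: L_def L_coords algebra_simps)
  then have "Z \<in> span {L, Y}"
    unfolding mem_span_pair_iff by blast
  then have span_L: "lcs br 2 \<subseteq> span {L, Y}"
    unfolding derived_eq by (intro real_vector.span_minimal) (auto intro: real_vector.span_base)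
  have gamma_vanish: "\<gamma> w x Y = 0" if x: "\<gamma> x L Y = 0" and w: "w \<in> lcs br 2" for w x
  proof -
    obtain s t where "w = s *\<^sub>R L + t *\<^sub>R Y"
      using w span_L mem_span_pair_iff[of w L Y] by blast
    then show ?thesis using x gamma_swap_left[of L x Y] by (simp add: gamma_expand)
  qed
  have gamma_Xk: "\<gamma> (X k) L Y = 0"
    using gamma_Xk_bracket_X3_Xk[OF k] by (simp add: L_def)
  have gamma_U: "\<gamma> U L Y = 0"
  proof -
    have "\<gamma> U L Y = a * \<gamma> Y (X 2) L + b * \<gamma> Y (X 3) L"
      using gamma_cyclic[of Y "X 2" L] gamma_cyclic[of Y "X 3" L] by (simp add: U_def gamma_expand)
    also have "\<dots> = a * \<gamma> Y (X 2) L + b * \<gamma> Z (X 2) L"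
      using gamma_Y_X3_bracket_X3_Xk[OF k] by (simp add: L_def)
    also have "\<dots> = \<gamma> L (X 2) L"
      using gamma_swap_outer[of Z "X 2" Y] by (simp add: L_coords[folded L_def] gamma_expand)
    finally show ?thesis by simp
  qed
  have alpha_U_Y: "\<alpha> U Y = 0"
    using alpha_L[of "X 2"] by (simp add: U_def L_def L_coords alpha_expand alpha_X3_Y)
  have bracket_Xk_U: "br (X k) U = - b *\<^sub>R L"
    using bracket_antisym[of "X k" "X 2"] bracket_antisym[of "X k" "X 3"] bracket_2k[OF k]
    by (simp add: U_def L_def bracket_expand)
  \<comment> \<open>d\<gamma> on (X k, U, x, Y): this exhibits the vector A0 required by (A_1) for L\<close>
  have main: "b * \<gamma> L x Y = B (\<alpha> (X k) U) (\<alpha> x Y)" for x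
    using gamma_cocycle[of "X k" U x Y] alpha_U_Y bracket_Xk_U
      gamma_vanish[OF gamma_Xk] gamma_vanish[OF gamma_U]
      alpha_Y_of_commuting[OF bracket_1k[OF k] bracket_2k[OF k]]
    by (simp add: d3_def half_wedge_def bracket_mem_lcs_two gamma_expand)
  have "L = 0"
  proof (rule derived_eq_zero_by_cond_A[OF L _ alpha_L span_L])
    show "(1 / b) *\<^sub>R \<alpha> (X k) U \<in> A"
      using subspace_A by (simp add: real_vector.subspace_scale)
    show "\<gamma> x L Y = - B ((1 / b) *\<^sub>R \<alpha> (X k) U) (\<alpha> x Y)" for x
      using main[of x] \<open>b \<noteq> 0\<close> gamma_swap_left[of x L Y]
      by (simp add: B_scale_left field_simps)
  qed
  then show ?thesis by (simp add: L_def)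
qed

theorem bracket_X3_Xk_eq_zero:
  assumes k: "5 \<le> k" "k \<le> n"
  shows "br (X 3) (X k) = 0"
proof -
  obtain a b where L_coords: "br (X 3) (X k) = a *\<^sub>R Y + b *\<^sub>R Z"
    using bracket_mem_lcs_two[of br "X 3" "X k"] by (auto simp: derived_eq mem_span_pair_iff)
  show ?thesis
  proof (cases "b = 0")
    case False
    then show ?thesis using bracket_X3_Xk_eq_zero_if_Z_coeff_nonzero[OF k L_coords] by simp
  next
    case True
    show ?thesis
    proof (cases "a = 0")
      case False
      then have "\<alpha> x Y = 0" for x
        using alpha_bracket_X3_Xk[OF k, of x] by (simp add: L_coords \<open>b = 0\<close> alpha_expand)
      then show ?thesis
        using Y_eq_zero_if_alpha_Y_zero by (simp add: L_coords \<open>b = 0\<close>)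
    qed (simp add: L_coords True)
  qed
qed

end

theorem lemma8:
  fixes br :: "'l::real_vector \<Rightarrow> 'l \<Rightarrow> 'l"
    and X :: "nat \<Rightarrow> 'l" and Y Z :: 'l and n :: nat
  assumes lie: "lie_algebra br"
    and nil: "nilpotent_lie br"
    and adm: "admissible_lie br TYPE('m::real_vector)"
    and dim_der: "dim (lcs br 2) = 2"
    and der_central: "lcs br 2 \<subseteq> centre br"
    and n4: "n \<ge> 4"
    and basis_indep: "independent (X ` {1..n} \<union> {Y, Z})"
    and basis_card: "card (X ` {1..n} \<union> {Y, Z}) = n + 2"
    and basis_span: "span (X ` {1..n} \<union> {Y, Z}) = UNIV"
    and b12: "br (X 1) (X 2) = Y"
    and b13: "br (X 1) (X 3) = Z"
    and b23: "br (X 2) (X 3) = 0"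
    and b14: "br (X 1) (X 4) = 0"
    and b24: "br (X 2) (X 4) = Z"
    and b1j: "\<forall>j. 5 \<le> j \<and> j \<le> n \<longrightarrow> br (X 1) (X j) = 0 \<and> br (X 2) (X j) = 0"
  shows "\<forall>j. 5 \<le> j \<and> j \<le> n \<longrightarrow> br (X 3) (X j) = 0"
proof -
  obtain A \<rho> B \<alpha> \<gamma> m where orth: "orth_module br (A :: 'm set) \<rho> B"
    and cocycle: "quad_cocycle br A \<rho> B \<alpha> \<gamma>" and inv: "\<forall>x y. \<alpha> x y \<in> invariants A \<rho>"
    and m: "lcs br (m + 2) = {0}" and conds: "\<forall>k\<le>m. cond_A br A \<rho> B \<alpha> \<gamma> k \<and> cond_B br B \<alpha> k"
    using adm unfolding admissible_lie_def admits_admissible_class_def by blast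
  have Y: "Y \<in> lcs br 2" and Z: "Z \<in> lcs br 2"
    using bracket_mem_lcs_two b12 b13 by metis+
  have indep: "independent {Y, Z}"
    using basis_indep by (rule real_vector.independent_mono) auto
  have "Y \<noteq> Z"
    using distinct_if_card_image_Un_pair[of "{1..n}" X Y Z] basis_card by simp
  have derived: "lcs br 2 = span {Y, Z}"
    using subspace_eq_span_pair[OF subspace_lcs_two dim_der Y Z indep \<open>Y \<noteq> Z\<close>] .
  have "Y \<noteq> 0"
    using indep real_vector.dependent_zero[of "{Y, Z}"] by auto
  have "m \<noteq> 0"
  proof
    assume "m = 0"
    then have "lcs br 2 = {0}" using m by (simp add: lcs_two)
    then show False using Y \<open>Y \<noteq> 0\<close> by simp
  qed
  interpret basis_configuration br A \<rho> B \<alpha> \<gamma> Y Z X n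
    using lie orth cocycle inv derived der_central conds \<open>m \<noteq> 0\<close> basis_span
      b12 b13 b23 b14 b24 b1j
    by unfold_locales auto
  show ?thesis using bracket_X3_Xk_eq_zero by blast
qed

end
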